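(* Let $V_1,V_2,\ldots$ be pairwise uncorrelated zero-mean random variables, all with the same variance $\sigma^2$, where $0<\sigma<\infty$, and let $T_n := \frac{1}{\sigma\sqrt n}\sum_{k=1}^n V_k$. Let $n_1<n_2<\cdots$ be natural numbers with $\lim_{m\to\infty} n_{m+1}/n_m = 1$. If $T_{n_1},T_{n_2},\ldots$ converges in law to a random variable $T$, then the whole sequence $T_1,T_2,\ldots$ converges in law to $T$. *)

theory Defs
  imports "HOL-Probability.Probability"
begin

definition norm_partial_sum :: "real \<Rightarrow> (nat \<Rightarrow> 'a \<Rightarrow> real) \<Rightarrow> nat \<Rightarrow> 'a \<Rightarrow> real" where
  "norm_partial_sum \<sigma> V n = (\<lambda>x. (1 / (\<sigma> * sqrt (real n))) * (\<Sum>k=1..n. V k x))"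

end

theory Submission
  imports Defs
begin

text \<open>For \<open>n\<^sub>m \<le> k < n\<^sub>m\<^sub>+\<^sub>1\<close>, the difference \<open>T\<^sub>k - T\<^bsub>n\<^sub>m\<^esub>\<close> is a linear combination of
  uncorrelated variables with second moment \<open>2 - 2 sqrt (n\<^sub>m / k) \<le> 2 (n\<^sub>m\<^sub>+\<^sub>1 / n\<^sub>m - 1)\<close>,
  which tends to 0. By Chebyshev's inequality \<open>T\<^sub>k\<close> is therefore close in probability to
  \<open>T\<^bsub>n\<^sub>m\<^esub>\<close>, and a sequence that is close in probability to one converging in law has the same
  limit law (comparing distribution functions at continuity points slightly to the left and
  right of a given continuity point).\<close>

lemma mono_exists_isCont_between:
  fixes f :: "real \<Rightarrow> real"
  assumes "mono f" "a < b"
  shows "\<exists>y\<in>{a<..<b}. isCont f y"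
  using open_minus_countable[OF mono_ctble_discont[OF assms(1)], of "{a<..<b}"] assms(2) by auto

lemma weak_conv_m_reindex:
  assumes "weak_conv_m \<mu>s \<mu>" "filterlim r at_top sequentially"
  shows "weak_conv_m (\<lambda>k. \<mu>s (r k)) \<mu>"
  using assms by (auto simp: weak_conv_m_def weak_conv_def intro: filterlim_compose)

lemma (in prob_space) cdf_distr:
  assumes [measurable]: "X \<in> borel_measurable M"
  shows "cdf (distr M borel X) x = prob {\<omega> \<in> space M. X \<omega> \<le> x}"
  unfolding cdf_def by (subst measure_distr) (auto intro!: arg_cong[where f=prob])

lemma (in prob_space) prob_le_le_prob_le_add_prob_apart:
  fixes X Y :: "'a \<Rightarrow> real"
  assumes [measurable]: "X \<in> borel_measurable M" "Y \<in> borel_measurable M"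
    and "x < y"
  shows "prob {\<omega> \<in> space M. X \<omega> \<le> x}
    \<le> prob {\<omega> \<in> space M. Y \<omega> \<le> y} + prob {\<omega> \<in> space M. y - x \<le> \<bar>X \<omega> - Y \<omega>\<bar>}"
proof -
  have "prob {\<omega> \<in> space M. X \<omega> \<le> x}
      \<le> prob ({\<omega> \<in> space M. Y \<omega> \<le> y} \<union> {\<omega> \<in> space M. y - x \<le> \<bar>X \<omega> - Y \<omega>\<bar>})"
  proof (rule finite_measure_mono)
    show "{\<omega> \<in> space M. X \<omega> \<le> x}
        \<subseteq> {\<omega> \<in> space M. Y \<omega> \<le> y} \<union> {\<omega> \<in> space M. y - x \<le> \<bar>X \<omega> - Y \<omega>\<bar>}"
      by (auto simp: not_le abs_less_iff)
  qed measurable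
  also have "\<dots> \<le> prob {\<omega> \<in> space M. Y \<omega> \<le> y} + prob {\<omega> \<in> space M. y - x \<le> \<bar>X \<omega> - Y \<omega>\<bar>}"
    by (intro measure_Un_le) auto
  finally show ?thesis .
qed

lemma (in prob_space) weak_conv_m_converging_together:
  fixes X Y :: "nat \<Rightarrow> 'a \<Rightarrow> real"
  assumes [measurable]: "\<And>k. X k \<in> borel_measurable M" "\<And>k. Y k \<in> borel_measurable M"
    and \<mu>: "real_distribution \<mu>"
    and Y_conv: "weak_conv_m (\<lambda>k. distr M borel (Y k)) \<mu>"
    and close: "\<And>d. 0 < d \<Longrightarrow> (\<lambda>k. prob {\<omega> \<in> space M. d \<le> \<bar>X k \<omega> - Y k \<omega>\<bar>}) \<longlonglongrightarrow> 0"
  shows "weak_conv_m (\<lambda>k. distr M borel (X k)) \<mu>"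
proof -
  interpret \<mu>: real_distribution \<mu> by fact
  let ?F = "cdf \<mu>"
  have F_mono: "mono ?F"
    using \<mu>.cdf_nondecreasing by (auto simp: mono_def)
  have Y_lim: "(\<lambda>k. prob {\<omega> \<in> space M. Y k \<omega> \<le> y}) \<longlonglongrightarrow> ?F y" if "isCont ?F y" for y
    using Y_conv that by (simp add: weak_conv_m_def weak_conv_def cdf_distr)
  have "(\<lambda>k. prob {\<omega> \<in> space M. X k \<omega> \<le> x}) \<longlonglongrightarrow> ?F x" if cont: "isCont ?F x" for x
  proof (rule order_tendstoI)
    fix b assume "?F x < b"
    then have "eventually (\<lambda>y. ?F y < b) (at x)"
      using cont by (simp add: isCont_def order_tendstoD)
    then obtain y' where "x < y'" and below_b: "\<And>y. x < y \<Longrightarrow> y < y' \<Longrightarrow> ?F y < b"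
      unfolding eventually_at_split eventually_at_right_field by blast
    then obtain y where y: "x < y" "y < y'" "isCont ?F y"
      using mono_exists_isCont_between[OF F_mono \<open>x < y'\<close>] by auto
    have "(\<lambda>k. prob {\<omega> \<in> space M. Y k \<omega> \<le> y} + prob {\<omega> \<in> space M. y - x \<le> \<bar>X k \<omega> - Y k \<omega>\<bar>})
        \<longlonglongrightarrow> ?F y + 0"
      using Y_lim[OF y(3)] close[of "y - x"] y(1) by (intro tendsto_add) auto
    then have "eventually (\<lambda>k. prob {\<omega> \<in> space M. Y k \<omega> \<le> y}
        + prob {\<omega> \<in> space M. y - x \<le> \<bar>X k \<omega> - Y k \<omega>\<bar>} < b) sequentially"
      using below_b[OF y(1,2)] by (intro order_tendstoD) auto
    moreover have "prob {\<omega> \<in> space M. X k \<omega> \<le> x}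
        \<le> prob {\<omega> \<in> space M. Y k \<omega> \<le> y} + prob {\<omega> \<in> space M. y - x \<le> \<bar>X k \<omega> - Y k \<omega>\<bar>}" for k
      using y(1) by (intro prob_le_le_prob_le_add_prob_apart) auto
    ultimately show "eventually (\<lambda>k. prob {\<omega> \<in> space M. X k \<omega> \<le> x} < b) sequentially"
      by (elim eventually_mono) (rule le_less_trans)
  next
    fix a assume "a < ?F x"
    then have "eventually (\<lambda>y. a < ?F y) (at x)"
      using cont by (simp add: isCont_def order_tendstoD)
    then obtain y' where "y' < x" and above_a: "\<And>y. y' < y \<Longrightarrow> y < x \<Longrightarrow> a < ?F y"
      unfolding eventually_at_split eventually_at_left_field by blast
    then obtain y where y: "y' < y" "y < x" "isCont ?F y"
      using mono_exists_isCont_between[OF F_mono \<open>y' < x\<close>] by auto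
    have "(\<lambda>k. prob {\<omega> \<in> space M. Y k \<omega> \<le> y} - prob {\<omega> \<in> space M. x - y \<le> \<bar>Y k \<omega> - X k \<omega>\<bar>})
        \<longlonglongrightarrow> ?F y - 0"
      using Y_lim[OF y(3)] close[of "x - y"] y(2) by (intro tendsto_diff) (auto simp: abs_minus_commute)
    then have "eventually (\<lambda>k. a < prob {\<omega> \<in> space M. Y k \<omega> \<le> y}
        - prob {\<omega> \<in> space M. x - y \<le> \<bar>Y k \<omega> - X k \<omega>\<bar>}) sequentially"
      using above_a[OF y(1,2)] by (intro order_tendstoD) auto
    moreover have "prob {\<omega> \<in> space M. Y k \<omega> \<le> y}
        \<le> prob {\<omega> \<in> space M. X k \<omega> \<le> x} + prob {\<omega> \<in> space M. x - y \<le> \<bar>Y k \<omega> - X k \<omega>\<bar>}" for k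
      using y(2) by (intro prob_le_le_prob_le_add_prob_apart) auto
    ultimately show "eventually (\<lambda>k. a < prob {\<omega> \<in> space M. X k \<omega> \<le> x}) sequentially"
      by (elim eventually_mono) (smt (verit))
  qed
  then show ?thesis
    by (simp add: weak_conv_m_def weak_conv_def cdf_distr)
qed

text \<open>For strictly increasing \<open>n\<close>, \<open>block_index n k\<close> is the \<open>m\<close> with \<open>n m \<le> k < n (Suc m)\<close>;
  for \<open>k < n 0\<close> it is an unspecified value.\<close>
definition block_index :: "(nat \<Rightarrow> nat) \<Rightarrow> nat \<Rightarrow> nat" where
  "block_index n k = (GREATEST m. n m \<le> k)"

lemma
  assumes "strict_mono n" "n 0 \<le> k"
  shows block_index_le: "n (block_index n k) \<le> k"
    and less_block_index_Suc: "k < n (Suc (block_index n k))"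
proof -
  have bounded: "m \<le> k" if "n m \<le> k" for m
    using seq_suble[OF assms(1), of m] that by simp
  show "n (block_index n k) \<le> k"
    unfolding block_index_def
    by (rule GreatestI_nat[where P = "\<lambda>m. n m \<le> k", OF assms(2) bounded])
  show "k < n (Suc (block_index n k))"
    using Greatest_le_nat[of "\<lambda>m. n m \<le> k" "Suc (block_index n k)" k] bounded
    unfolding block_index_def by fastforce
qed

lemma filterlim_block_index:
  assumes "strict_mono n"
  shows "filterlim (block_index n) at_top sequentially"
  unfolding filterlim_at_top eventually_sequentially
proof (intro allI exI impI)
  fix m k assume "n m \<le> k"
  then show "m \<le> block_index n k"
    unfolding block_index_def
    by (rule Greatest_le_nat) (use seq_suble[OF assms] le_trans in blast)
qed

lemma sum_if_le_split:
  fixes f g :: "nat \<Rightarrow> 'b::comm_monoid_add"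
  assumes "p \<le> k"
  shows "(\<Sum>j=1..k. if j \<le> p then f j else g j) = (\<Sum>j=1..p. f j) + (\<Sum>j=Suc p..k. g j)"
proof -
  have "{1..k} = {1..p} \<union> {Suc p..k}"
    using assms by auto
  then show ?thesis
    by (simp add: sum.union_disjoint ivl_disj_int_two(7))
qed

lemma norm_partial_sum_diff:
  assumes "p \<le> k"
  shows "norm_partial_sum \<sigma> V k x - norm_partial_sum \<sigma> V p x
    = (\<Sum>j=1..k. (if j \<le> p then 1 / (\<sigma> * sqrt k) - 1 / (\<sigma> * sqrt p) else 1 / (\<sigma> * sqrt k)) * V j x)"
proof -
  have split: "(\<Sum>j=1..k. V j x) = (\<Sum>j=1..p. V j x) + (\<Sum>j=Suc p..k. V j x)"
    using sum_if_le_split[OF assms, of "\<lambda>j. V j x" "\<lambda>j. V j x"] by simp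
  show ?thesis
    unfolding norm_partial_sum_def if_distrib[where f = "\<lambda>c. c * V _ x"] sum_if_le_split[OF assms]
      split
    by (simp add: left_diff_distrib sum_subtractf sum_distrib_left distrib_left)
qed

locale uncorrelated_sequence = prob_space M for M :: "'a measure" +
  fixes V :: "nat \<Rightarrow> 'a \<Rightarrow> real" and \<sigma> :: real
  assumes V_measurable: "\<And>k. 1 \<le> k \<Longrightarrow> V k \<in> borel_measurable M"
    and V_square_integrable: "\<And>k. 1 \<le> k \<Longrightarrow> integrable M (\<lambda>x. (V k x)\<^sup>2)"
    and expectation_V: "\<And>k. 1 \<le> k \<Longrightarrow> expectation (V k) = 0"
    and variance_V: "\<And>k. 1 \<le> k \<Longrightarrow> variance (V k) = \<sigma>\<^sup>2"
    and uncorrelated: "\<And>i j. 1 \<le> i \<Longrightarrow> 1 \<le> j \<Longrightarrow> i \<noteq> j \<Longrightarrow>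
        expectation (\<lambda>x. (V i x - expectation (V i)) * (V j x - expectation (V j))) = 0"
    and sigma_pos: "0 < \<sigma>"
begin

lemma integrable_V_mult:
  assumes "1 \<le> i" "1 \<le> j"
  shows "integrable M (\<lambda>x. V i x * V j x)"
proof (rule Bochner_Integration.integrable_bound)
  show "integrable M (\<lambda>x. (V i x)\<^sup>2 + (V j x)\<^sup>2)"
    using V_square_integrable assms by auto
  show "(\<lambda>x. V i x * V j x) \<in> borel_measurable M"
    using V_measurable assms by auto
  have "\<bar>a * b\<bar> \<le> a\<^sup>2 + b\<^sup>2" for a b :: real
    using sum_squares_bound[of "\<bar>a\<bar>" "\<bar>b\<bar>"] abs_ge_zero[of "a * b"]
    unfolding abs_mult power2_abs by linarith
  then show "AE x in M. norm (V i x * V j x) \<le> norm ((V i x)\<^sup>2 + (V j x)\<^sup>2)"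
    by simp
qed

lemma expectation_V_mult:
  assumes "1 \<le> i" "1 \<le> j"
  shows "expectation (\<lambda>x. V i x * V j x) = (if i = j then \<sigma>\<^sup>2 else 0)"
  using uncorrelated[OF assms] variance_V[OF assms(1)] expectation_V assms
  by (auto simp: power2_eq_square)

lemma has_bochner_integral_square_sum:
  assumes "finite A" "A \<subseteq> {1..}"
  shows "has_bochner_integral M (\<lambda>x. (\<Sum>j\<in>A. c j * V j x)\<^sup>2) (\<sigma>\<^sup>2 * (\<Sum>j\<in>A. (c j)\<^sup>2))"
proof -
  have "has_bochner_integral M (\<lambda>x. \<Sum>i\<in>A. \<Sum>j\<in>A. c i * c j * (V i x * V j x))
      (\<Sum>i\<in>A. \<Sum>j\<in>A. c i * c j * (if i = j then \<sigma>\<^sup>2 else 0))"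
    using assms(2) integrable_V_mult expectation_V_mult
    by (intro has_bochner_integral_sum has_bochner_integral_mult_right)
      (auto simp: has_bochner_integral_iff subset_eq)
  moreover have "(\<Sum>j\<in>A. c j * V j x)\<^sup>2 = (\<Sum>i\<in>A. \<Sum>j\<in>A. c i * c j * (V i x * V j x))" for x
    by (simp add: power2_eq_square sum_product mult_ac)
  moreover have "(\<Sum>i\<in>A. \<Sum>j\<in>A. c i * c j * (if i = j then \<sigma>\<^sup>2 else 0)) = \<sigma>\<^sup>2 * (\<Sum>j\<in>A. (c j)\<^sup>2)"
    using assms(1)
    by (simp add: if_distrib[where f = "\<lambda>t. _ * t"] sum_distrib_left power2_eq_square mult_ac
        cong: if_cong)
  ultimately show ?thesis
    by simp
qed

lemma borel_measurable_norm_partial_sum [measurable]: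
  "norm_partial_sum \<sigma> V k \<in> borel_measurable M"
  unfolding norm_partial_sum_def using V_measurable by measurable

lemma has_bochner_integral_square_norm_partial_sum_diff:
  assumes "1 \<le> p" "p \<le> k"
  shows "has_bochner_integral M (\<lambda>x. (norm_partial_sum \<sigma> V k x - norm_partial_sum \<sigma> V p x)\<^sup>2)
    (2 - 2 * sqrt (p / k))"
proof -
  define a b where "a = 1 / (\<sigma> * sqrt k) - 1 / (\<sigma> * sqrt p)" and "b = 1 / (\<sigma> * sqrt k)"
  have "has_bochner_integral M (\<lambda>x. (\<Sum>j=1..k. (if j \<le> p then a else b) * V j x)\<^sup>2)
      (\<sigma>\<^sup>2 * (\<Sum>j=1..k. (if j \<le> p then a else b)\<^sup>2))"
    by (rule has_bochner_integral_square_sum) auto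
  moreover have "(\<Sum>j=1..k. (if j \<le> p then a else b)\<^sup>2) = p * a\<^sup>2 + (real k - real p) * b\<^sup>2"
    using sum_if_le_split[OF assms(2), of "\<lambda>_. a\<^sup>2" "\<lambda>_. b\<^sup>2"] assms
    by (simp add: if_distrib[where f = "\<lambda>t. t\<^sup>2"] of_nat_diff)
  moreover have "\<sigma>\<^sup>2 * (p * a\<^sup>2 + (real k - real p) * b\<^sup>2) = 2 - 2 * sqrt (p / k)"
  proof -
    define s r where "s = sqrt p" and "r = sqrt k"
    have sr: "0 < s" "0 < r" and p: "p = s\<^sup>2" and k: "k = r\<^sup>2" and sqrt_pk: "sqrt (p / k) = s / r"
      using assms by (auto simp: s_def r_def real_sqrt_divide)
    show ?thesis
      unfolding a_def b_def sqrt_pk unfolding s_def[symmetric] r_def[symmetric] p k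
      using sr sigma_pos by (simp add: field_simps power2_eq_square)
  qed
  ultimately have "has_bochner_integral M (\<lambda>x. (\<Sum>j=1..k. (if j \<le> p then a else b) * V j x)\<^sup>2)
      (2 - 2 * sqrt (p / k))"
    by simp
  then show ?thesis
    unfolding norm_partial_sum_diff[OF assms(2)] a_def b_def .
qed

lemma prob_dist_norm_partial_sum_le:
  assumes "1 \<le> p" "p \<le> k" "0 < d"
  shows "prob {x \<in> space M. d \<le> \<bar>norm_partial_sum \<sigma> V k x - norm_partial_sum \<sigma> V p x\<bar>}
    \<le> 2 * (1 - p / k) / d\<^sup>2"
proof -
  note second_moment = has_bochner_integral_square_norm_partial_sum_diff[OF assms(1,2)]
  have "prob {x \<in> space M. d \<le> \<bar>norm_partial_sum \<sigma> V k x - norm_partial_sum \<sigma> V p x\<bar>}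
      \<le> expectation (\<lambda>x. (norm_partial_sum \<sigma> V k x - norm_partial_sum \<sigma> V p x)\<^sup>2) / d\<^sup>2"
    using second_moment assms(3)
    by (intro second_moment_method) (auto simp: has_bochner_integral_iff)
  also have "\<dots> = (2 - 2 * sqrt (p / k)) / d\<^sup>2"
    using second_moment by (simp add: has_bochner_integral_iff)
  also have "p / k \<le> sqrt (p / k)"
    using power_decreasing[of 1 2 "p / k"] assms by (intro real_le_rsqrt) simp
  then have "(2 - 2 * sqrt (p / k)) / d\<^sup>2 \<le> 2 * (1 - p / k) / d\<^sup>2"
    by (intro divide_right_mono) auto
  finally show ?thesis .
qed

lemma tendsto_prob_dist_block_start:
  assumes n: "strict_mono n" "1 \<le> n 0"
    and ratio: "(\<lambda>m. real (n (Suc m)) / real (n m)) \<longlonglongrightarrow> 1"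
    and "0 < d"
  shows "(\<lambda>k. prob {x \<in> space M.
    d \<le> \<bar>norm_partial_sum \<sigma> V k x - norm_partial_sum \<sigma> V (n (block_index n k)) x\<bar>}) \<longlonglongrightarrow> 0"
proof (rule Lim_null_comparison)
  let ?b = "block_index n"
  have "(\<lambda>k. real (n (Suc (?b k))) / real (n (?b k))) \<longlonglongrightarrow> 1"
    using filterlim_compose[OF ratio filterlim_block_index[OF n(1)]] .
  then have "(\<lambda>k. 2 * (real (n (Suc (?b k))) / real (n (?b k)) - 1) / d\<^sup>2) \<longlonglongrightarrow> 2 * (1 - 1) / d\<^sup>2"
    by (intro tendsto_intros) (use \<open>0 < d\<close> in auto)
  then show "(\<lambda>k. 2 * (real (n (Suc (?b k))) / real (n (?b k)) - 1) / d\<^sup>2) \<longlonglongrightarrow> 0"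
    by simp
  show "eventually (\<lambda>k. norm (prob {x \<in> space M.
      d \<le> \<bar>norm_partial_sum \<sigma> V k x - norm_partial_sum \<sigma> V (n (?b k)) x\<bar>})
      \<le> 2 * (real (n (Suc (?b k))) / real (n (?b k)) - 1) / d\<^sup>2) sequentially"
    unfolding eventually_sequentially
  proof (intro exI allI impI)
    fix k assume "n 0 \<le> k"
    define p q where "p = n (?b k)" and "q = n (Suc (?b k))"
    have "1 \<le> p"
      using n strict_mono_less_eq[OF n(1), of 0 "?b k"] unfolding p_def by simp
    have "p \<le> k" "k < q"
      using block_index_le[OF n(1) \<open>n 0 \<le> k\<close>] less_block_index_Suc[OF n(1) \<open>n 0 \<le> k\<close>]
      unfolding p_def q_def by auto
    have "1 - p / k = (real k - p) / k"
      using \<open>p \<le> k\<close> \<open>1 \<le> p\<close> by (simp add: field_simps)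
    also have "\<dots> \<le> (real k - p) / p"
      using \<open>p \<le> k\<close> \<open>1 \<le> p\<close> by (intro divide_left_mono) auto
    also have "\<dots> \<le> (real q - p) / p"
      using \<open>k < q\<close> by (intro divide_right_mono) auto
    also have "\<dots> = q / p - 1"
      using \<open>1 \<le> p\<close> by (simp add: field_simps)
    finally have "2 * (1 - p / k) / d\<^sup>2 \<le> 2 * (q / p - 1) / d\<^sup>2"
      by (intro divide_right_mono) auto
    with prob_dist_norm_partial_sum_le[OF \<open>1 \<le> p\<close> \<open>p \<le> k\<close> \<open>0 < d\<close>]
    show "norm (prob {x \<in> space M.
        d \<le> \<bar>norm_partial_sum \<sigma> V k x - norm_partial_sum \<sigma> V (n (?b k)) x\<bar>})
        \<le> 2 * (real (n (Suc (?b k))) / real (n (?b k)) - 1) / d\<^sup>2"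
      unfolding p_def q_def by simp
  qed
qed

end

theorem lemma2p4:
  fixes M :: "'a measure" and V :: "nat \<Rightarrow> 'a \<Rightarrow> real" and \<sigma> :: real
    and N :: "'b measure" and T :: "'b \<Rightarrow> real" and n :: "nat \<Rightarrow> nat"
  assumes M: "prob_space M"
    and meas: "\<And>k. k \<ge> 1 \<Longrightarrow> V k \<in> borel_measurable M"
    and sq_int: "\<And>k. k \<ge> 1 \<Longrightarrow> integrable M (\<lambda>x. (V k x)\<^sup>2)"
    and mean0: "\<And>k. k \<ge> 1 \<Longrightarrow> prob_space.expectation M (V k) = 0"
    and var: "\<And>k. k \<ge> 1 \<Longrightarrow> prob_space.variance M (V k) = \<sigma>\<^sup>2"
    and uncorr: "\<And>i j. i \<ge> 1 \<Longrightarrow> j \<ge> 1 \<Longrightarrow> i \<noteq> j \<Longrightarrow>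
        prob_space.expectation M (\<lambda>x. (V i x - prob_space.expectation M (V i)) *
                                       (V j x - prob_space.expectation M (V j))) = 0"
    and sigma_pos: "0 < \<sigma>"
    and N: "prob_space N" and T_meas: "T \<in> borel_measurable N"
    and n_mono: "strict_mono n" and n_pos: "n 0 \<ge> 1"
    and n_ratio: "(\<lambda>m. real (n (Suc m)) / real (n m)) \<longlonglongrightarrow> 1"
    and sub_conv: "weak_conv_m (\<lambda>m. distr M borel (norm_partial_sum \<sigma> V (n m))) (distr N borel T)"
  shows "weak_conv_m (\<lambda>k. distr M borel (norm_partial_sum \<sigma> V (Suc k))) (distr N borel T)"
proof -
  interpret uncorrelated_sequence M V \<sigma>
    using M meas sq_int mean0 var uncorr sigma_pos
    by (intro uncorrelated_sequence.intro uncorrelated_sequence_axioms.intro) auto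
  let ?b = "\<lambda>k. block_index n (Suc k)"
  have "filterlim ?b at_top sequentially"
    using filterlim_compose[OF filterlim_block_index[OF n_mono] filterlim_Suc] .
  then have block_conv:
    "weak_conv_m (\<lambda>k. distr M borel (norm_partial_sum \<sigma> V (n (?b k)))) (distr N borel T)"
    by (rule weak_conv_m_reindex[OF sub_conv])
  have "(\<lambda>k. prob {x \<in> space M.
      d \<le> \<bar>norm_partial_sum \<sigma> V (Suc k) x - norm_partial_sum \<sigma> V (n (?b k)) x\<bar>}) \<longlonglongrightarrow> 0"
    if "0 < d" for d
    using LIMSEQ_Suc[OF tendsto_prob_dist_block_start[OF n_mono n_pos n_ratio that]] .
  with block_conv show ?thesis
    using weak_conv_m_converging_together[where X = "\<lambda>k. norm_partial_sum \<sigma> V (Suc k)"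
        and Y = "\<lambda>k. norm_partial_sum \<sigma> V (n (?b k))"]
      prob_space.real_distribution_distr[OF N T_meas]
    by simp
qed

end
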